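(* Let $m\geq 1$ and $n>1$ be integers and let $G$ be an $r$-regular graph of order $m$. If $n\equiv 0\pmod 2$, or $mn\equiv 1\pmod 2$, or $G$ is distance magic, then $G\circ nK_1$ is distance magic.
   Context: A graph $G$ on $v$ vertices is distance magic if there is a bijection $f:V(G)\to\{1,\ldots,v\}$ and a constant $k$ such that for every vertex $x$, $\sum_{y\in N(x)}f(y)=k$, where $N(x)$ is the set of neighbours of $x$. $nK_1$ is the edgeless graph on $n$ vertices. The lexicographic product $G\circ H$ has vertex set $V(G)\times V(H)$, with $(g,h)$ adjacent to $(g',h')$ iff either $gg'\in E(G)$, or $g=g'$ and $hh'\in E(H)$. *)

theory Defs
  imports Main
begin

definition simple_graph :: "'a set \<Rightarrow> ('a \<Rightarrow> 'a \<Rightarrow> bool) \<Rightarrow> bool" where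
  "simple_graph V E \<longleftrightarrow> finite V \<and> (\<forall>x y. E x y \<longrightarrow> x \<in> V \<and> y \<in> V)
     \<and> (\<forall>x y. E x y \<longrightarrow> E y x) \<and> (\<forall>x. \<not> E x x)"

definition nbhd :: "'a set \<Rightarrow> ('a \<Rightarrow> 'a \<Rightarrow> bool) \<Rightarrow> 'a \<Rightarrow> 'a set" where
  "nbhd V E x = {y \<in> V. E x y}"

definition regular :: "'a set \<Rightarrow> ('a \<Rightarrow> 'a \<Rightarrow> bool) \<Rightarrow> nat \<Rightarrow> bool" where
  "regular V E r \<longleftrightarrow> (\<forall>x\<in>V. card (nbhd V E x) = r)"

definition distance_magic :: "'a set \<Rightarrow> ('a \<Rightarrow> 'a \<Rightarrow> bool) \<Rightarrow> bool" where
  "distance_magic V E \<longleftrightarrow> (\<exists>f :: 'a \<Rightarrow> nat. \<exists>k. bij_betw f V {1..card V} \<and>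
      (\<forall>x\<in>V. (\<Sum>y\<in>nbhd V E x. f y) = k))"

definition lex_verts :: "'a set \<Rightarrow> 'b set \<Rightarrow> ('a \<times> 'b) set" where
  "lex_verts V W = V \<times> W"

definition lex_edges :: "('a \<Rightarrow> 'a \<Rightarrow> bool) \<Rightarrow> ('b \<Rightarrow> 'b \<Rightarrow> bool) \<Rightarrow> ('a \<times> 'b) \<Rightarrow> ('a \<times> 'b) \<Rightarrow> bool" where
  "lex_edges E F p q \<longleftrightarrow> E (fst p) (fst q) \<or> (fst p = fst q \<and> F (snd p) (snd q))"

definition empty_verts :: "nat \<Rightarrow> nat set" where "empty_verts n = {0..<n}"
definition empty_edges :: "nat \<Rightarrow> nat \<Rightarrow> bool" where "empty_edges x y = False"

end

theory Submission
  imports Defs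
begin

text \<open>Give the copy \<open>V \<times> {i}\<close> of \<open>G\<close> the labels \<open>i m + 1, \<dots>, i m + m\<close>, distributed by a bijection
  \<open>g(-,i) : V \<rightarrow> {0..<m}\<close>. As \<open>(x,i)\<close> has neighbourhood \<open>N(x) \<times> {0..<n}\<close>, its weight is
  \<open>r \<Sum>\<^sub>i (i m + 1)\<close> plus the sum of \<open>\<Sum>\<^sub>i g(y,i)\<close> over \<open>y \<in> N(x)\<close>, and only this double sum
  has to be independent of \<open>x\<close>. If \<open>G\<close> is distance magic with labelling \<open>\<psi>\<close>, take \<open>g(y,i) = \<psi>(y) - 1\<close>.
  Otherwise take \<open>g(y,i) = \<sigma>\<^sub>i(\<phi>(y))\<close> for a Kotzig array \<open>\<sigma>\<close>: \<open>n\<close> permutations of \<open>{0..<m}\<close>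
  with constant column sums. Such arrays exist for even \<open>n\<close> (pair each permutation with its
  complement \<open>m - 1 - j\<close>) and for odd \<open>m\<close> and odd \<open>n > 1\<close> (one explicit array with three rows,
  then pairs).\<close>

definition kotzig_array :: "nat \<Rightarrow> nat \<Rightarrow> (nat \<Rightarrow> nat \<Rightarrow> nat) \<Rightarrow> bool" where
  "kotzig_array m n \<sigma> \<longleftrightarrow> (\<forall>i<n. bij_betw (\<sigma> i) {0..<m} {0..<m}) \<and> (\<exists>c. \<forall>j<m. (\<Sum>i<n. \<sigma> i j) = c)"

lemma inj_imp_bij_betw_atLeast0_lessThan:
  assumes "\<And>x. x < m \<Longrightarrow> s x < (m::nat)"
    and "\<And>x y. x < m \<Longrightarrow> y < m \<Longrightarrow> s x = s y \<Longrightarrow> x = y"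
  shows "bij_betw s {0..<m} {0..<m}"
proof -
  have inj: "inj_on s {0..<m}" using assms(2) by (auto simp: inj_on_def)
  moreover have "s ` {0..<m} \<subseteq> {0..<m}" using assms(1) by auto
  ultimately show ?thesis by (simp add: bij_betw_def endo_inj_surj)
qed

lemma kotzig_array_0: "kotzig_array m 0 \<sigma>"
  by (simp add: kotzig_array_def)

lemma kotzig_array_append:
  assumes "kotzig_array m a \<sigma>" and "kotzig_array m b \<tau>"
  shows "kotzig_array m (a + b) (\<lambda>i. if i < a then \<sigma> i else \<tau> (i - a))"
proof -
  obtain c d where c: "\<And>j. j < m \<Longrightarrow> (\<Sum>i<a. \<sigma> i j) = c"
    and d: "\<And>j. j < m \<Longrightarrow> (\<Sum>i<b. \<tau> i j) = d"
    using assms by (auto simp: kotzig_array_def)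
  have "(\<Sum>i<a + b. (if i < a then \<sigma> i else \<tau> (i - a)) j) = c + d" if "j < m" for j
  proof -
    have "(\<Sum>i<a + b. (if i < a then \<sigma> i else \<tau> (i - a)) j)
        = (\<Sum>i<a. \<sigma> i j) + (\<Sum>i\<in>{a..<a + b}. \<tau> (i - a) j)"
      by (simp add: lessThan_atLeast0 flip: sum.atLeastLessThan_concat[of 0 a "a + b"])
    also have "(\<Sum>i\<in>{a..<a + b}. \<tau> (i - a) j) = (\<Sum>i<b. \<tau> i j)"
      using sum.shift_bounds_nat_ivl[of "\<lambda>i. \<tau> (i - a) j" 0 a b]
      by (simp add: lessThan_atLeast0 add.commute)
    finally show ?thesis using c d that by simp
  qed
  moreover have "bij_betw (if i < a then \<sigma> i else \<tau> (i - a)) {0..<m} {0..<m}" if "i < a + b" for i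
    using assms that by (auto simp: kotzig_array_def)
  ultimately show ?thesis by (auto simp: kotzig_array_def)
qed

lemma kotzig_array_2: "kotzig_array m 2 (\<lambda>i j. if i = 0 then j else m - 1 - j)"
proof -
  have "bij_betw (\<lambda>j. m - 1 - j) {0..<m} {0..<m}"
    by (rule inj_imp_bij_betw_atLeast0_lessThan) auto
  then show ?thesis
    by (auto simp: kotzig_array_def numeral_2_eq_2 less_Suc_eq bij_betw_def intro!: exI[of _ "m - 1"])
qed

lemma kotzig_array_even:
  assumes "even n"
  shows "\<exists>\<sigma>. kotzig_array m n \<sigma>"
proof -
  obtain t where "n = 2 * t" using assms by blast
  moreover have "\<exists>\<sigma>. kotzig_array m (2 * t) \<sigma>"
  proof (induction t)
    case 0
    show ?case using kotzig_array_0 by auto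
  next
    case (Suc t)
    then obtain \<sigma> where "kotzig_array m (2 * t) \<sigma>" by blast
    from kotzig_array_append[OF this kotzig_array_2] show ?case by auto
  qed
  ultimately show ?thesis by simp
qed

text \<open>For \<open>m = 2h + 1\<close> the three rows \<open>j\<close>, \<open>j + h mod m\<close> and \<open>2h - 2j mod m\<close> have column sum \<open>3h\<close>.\<close>
lemma kotzig_array_3:
  assumes "m = 2 * h + 1"
  shows "kotzig_array m 3 (\<lambda>i j. if i = 0 then j
           else if i = 1 then (if j \<le> h then j + h else j - h - 1)
           else (if j \<le> h then 2 * h - 2 * j else 4 * h + 1 - 2 * j))"
proof -
  have shift: "bij_betw (\<lambda>j. if j \<le> h then j + h else j - h - 1) {0..<m} {0..<m}"
    by (rule inj_imp_bij_betw_atLeast0_lessThan) (auto simp: assms split: if_splits)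
  have double: "bij_betw (\<lambda>j. if j \<le> h then 2 * h - 2 * j else 4 * h + 1 - 2 * j) {0..<m} {0..<m}"
  proof (rule inj_imp_bij_betw_atLeast0_lessThan)
    fix x y
    assume xy: "x < m" "y < m"
      and eq: "(if x \<le> h then 2 * h - 2 * x else 4 * h + 1 - 2 * x)
         = (if y \<le> h then 2 * h - 2 * y else 4 * h + 1 - 2 * y)"
    then show "x = y"
    proof (cases "x \<le> h"; cases "y \<le> h")
      assume "x \<le> h" "\<not> y \<le> h"
      with eq xy assms have "2 * (h - x) = 2 * (2 * h - y) + 1" by simp
      then show ?thesis by presburger
    next
      assume "\<not> x \<le> h" "y \<le> h"
      with eq xy assms have "2 * (h - y) = 2 * (2 * h - x) + 1" by simp
      then show ?thesis by presburger
    qed (use assms in \<open>auto split: if_splits\<close>)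
  qed (auto simp: assms)
  have "bij_betw (\<lambda>j. j) {0..<m} {0..<m}" by (simp add: bij_betw_def)
  with shift double have rows: "bij_betw (\<lambda>j. if i = 0 then j
           else if i = 1 then (if j \<le> h then j + h else j - h - 1)
           else (if j \<le> h then 2 * h - 2 * j else 4 * h + 1 - 2 * j)) {0..<m} {0..<m}" for i
    by (cases "i = 0"; cases "i = 1") simp_all
  have "(\<Sum>i<3::nat. if i = 0 then j
           else if i = 1 then (if j \<le> h then j + h else j - h - 1)
           else (if j \<le> h then 2 * h - 2 * j else 4 * h + 1 - 2 * j)) = 3 * h" if "j < m" for j
    using that assms by (simp add: lessThan_nat_numeral)
  with rows show ?thesis by (auto simp: kotzig_array_def)
qed

lemma kotzig_array_odd:
  assumes "odd m" and "odd n" and "n > 1"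
  shows "\<exists>\<sigma>. kotzig_array m n \<sigma>"
proof -
  obtain h where "m = 2 * h + 1" using assms(1) oddE by blast
  from kotzig_array_3[OF this] obtain \<sigma> where \<sigma>: "kotzig_array m 3 \<sigma>" by blast
  have "even (n - 3)" using assms(2,3) by presburger
  then obtain \<tau> where \<tau>: "kotzig_array m (n - 3) \<tau>" using kotzig_array_even by blast
  have "n = 3 + (n - 3)" using assms(2,3) by presburger
  then show ?thesis using kotzig_array_append[OF \<sigma> \<tau>] by metis
qed

lemma block_labelling_bij:
  fixes g :: "'a \<Rightarrow> nat \<Rightarrow> nat"
  assumes "\<And>i. i < n \<Longrightarrow> bij_betw (\<lambda>y. g y i) V {0..<m}"
  shows "bij_betw (\<lambda>(y, i). i * m + g y i + 1) (V \<times> {0..<n}) {1..m * n}"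
proof -
  have lt: "g y i < m" if "y \<in> V" "i < n" for y i
    using assms[OF that(2)] that(1) by (auto simp: bij_betw_def)
  have "inj_on (\<lambda>(y, i). i * m + g y i + 1) (V \<times> {0..<n})"
  proof (rule inj_onI, clarify)
    fix y i y' i'
    assume eq: "i * m + g y i + 1 = i' * m + g y' i' + 1"
      and "y \<in> V" "i \<in> {0..<n}" "y' \<in> V" "i' \<in> {0..<n}"
    then have yi: "y \<in> V" "i < n" "y' \<in> V" "i' < n" by auto
    have "i = (i * m + g y i) div m" using lt[OF yi(1,2)] by simp
    moreover have "i' = (i' * m + g y' i') div m" using lt[OF yi(3,4)] by simp
    ultimately have "i = i'" using eq by simp
    with eq have "g y i = g y' i" by simp
    then show "y = y' \<and> i = i'"
      using assms[OF yi(2)] yi \<open>i = i'\<close> by (auto simp: bij_betw_def inj_on_def)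
  qed
  moreover have "(\<lambda>(y, i). i * m + g y i + 1) ` (V \<times> {0..<n}) = {1..m * n}"
  proof
    have "i * m + g y i + 1 \<in> {1..m * n}" if "y \<in> V" "i < n" for y i
    proof -
      have "Suc i * m \<le> n * m" using \<open>i < n\<close> by (intro mult_le_mono1) simp
      then show ?thesis using lt[OF that] by (simp add: mult.commute)
    qed
    then show "(\<lambda>(y, i). i * m + g y i + 1) ` (V \<times> {0..<n}) \<subseteq> {1..m * n}" by auto
  next
    show "{1..m * n} \<subseteq> (\<lambda>(y, i). i * m + g y i + 1) ` (V \<times> {0..<n})"
    proof
      fix z assume z: "z \<in> {1..m * n}"
      define i where "i = (z - 1) div m"
      have "z - 1 < n * m" using z by (auto simp: mult.commute)
      then have i: "i < n" by (simp add: i_def less_mult_imp_div_less)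
      have "m > 0" using z by (cases m) auto
      then have "(z - 1) mod m \<in> (\<lambda>y. g y i) ` V"
        using bij_betw_imp_surj_on[OF assms[OF i]] by simp
      then obtain y where "y \<in> V" "g y i = (z - 1) mod m" by auto
      moreover have "z = i * m + (z - 1) mod m + 1" using z by (simp add: i_def)
      ultimately show "z \<in> (\<lambda>(y, i). i * m + g y i + 1) ` (V \<times> {0..<n})" using i by force
    qed
  qed
  ultimately show ?thesis by (simp add: bij_betw_def)
qed

lemma nbhd_lex_empty:
  assumes "simple_graph V E" and "p \<in> V \<times> {0..<n}"
  shows "nbhd (V \<times> {0..<n}) (lex_edges E empty_edges) p = nbhd V E (fst p) \<times> {0..<n}"
  using assms by (auto simp: nbhd_def lex_edges_def empty_edges_def simple_graph_def)

lemma distance_magic_lex_empty_if_block_labelling: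
  assumes G: "simple_graph V E" and reg: "regular V E r" and m: "card V = m"
    and rows: "\<And>i. i < n \<Longrightarrow> bij_betw (\<lambda>y. g y i) V {0..<m}"
    and magic: "\<And>x. x \<in> V \<Longrightarrow> (\<Sum>y\<in>nbhd V E x. \<Sum>i<n. g y i) = K"
  shows "distance_magic (lex_verts V (empty_verts n)) (lex_edges E empty_edges)"
proof -
  define f where "f = (\<lambda>(y, i). i * m + g y i + 1)"
  define C where "C = (\<Sum>i<n. i * m + 1)"
  have "card (V \<times> {0..<n}) = m * n"
    using G m by (simp add: simple_graph_def card_cartesian_product)
  then have bij: "bij_betw f (V \<times> {0..<n}) {1..card (V \<times> {0..<n})}"
    using block_labelling_bij[OF rows] by (simp add: f_def)
  have "(\<Sum>q\<in>nbhd (V \<times> {0..<n}) (lex_edges E empty_edges) (x, i). f q) = r * C + K"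
    if "(x, i) \<in> V \<times> {0..<n}" for x i
  proof -
    have "(\<Sum>q\<in>nbhd (V \<times> {0..<n}) (lex_edges E empty_edges) (x, i). f q)
        = (\<Sum>y\<in>nbhd V E x. \<Sum>i<n. (i * m + 1) + g y i)"
      using nbhd_lex_empty[OF G that]
      by (simp add: sum.cartesian_product lessThan_atLeast0 f_def add.commute add.left_commute)
    also have "\<dots> = (\<Sum>y\<in>nbhd V E x. C + (\<Sum>i<n. g y i))"
      by (simp only: sum.distrib C_def)
    also have "\<dots> = card (nbhd V E x) * C + K"
      using magic that by (simp add: sum.distrib)
    finally show ?thesis using reg that by (simp add: regular_def)
  qed
  with bij show ?thesis
    unfolding distance_magic_def lex_verts_def empty_verts_def by fast
qed

lemma distance_magic_lex_empty_of_distance_magic: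
  assumes G: "simple_graph V E" and reg: "regular V E r" and "distance_magic V E"
  shows "distance_magic (lex_verts V (empty_verts n)) (lex_edges E empty_edges)"
proof -
  obtain \<psi> k where \<psi>: "bij_betw \<psi> V {1..card V}"
    and k: "\<And>x. x \<in> V \<Longrightarrow> (\<Sum>y\<in>nbhd V E x. \<psi> y) = k"
    using assms(3) unfolding distance_magic_def by blast
  have "bij_betw (\<lambda>z. z - 1) {1..card V} {0..<card V}"
    by (rule bij_betw_byWitness[where f' = Suc]) auto
  then have "bij_betw (\<lambda>y. \<psi> y - 1) V {0..<card V}"
    using bij_betw_trans[OF \<psi>] by (simp add: o_def)
  moreover have "(\<Sum>y\<in>nbhd V E x. \<Sum>i<n. \<psi> y - 1) = n * (k - r)" if "x \<in> V" for x
  proof -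
    have "(\<Sum>y\<in>nbhd V E x. \<psi> y - 1) = (\<Sum>y\<in>nbhd V E x. \<psi> y) - (\<Sum>y\<in>nbhd V E x. 1)"
      using bij_betw_apply[OF \<psi>] by (intro sum_subtractf_nat) (auto simp: nbhd_def)
    also have "\<dots> = k - r" using k[OF that] reg that by (simp add: regular_def)
    finally show ?thesis by (simp flip: sum_distrib_left)
  qed
  ultimately show ?thesis
    by (rule distance_magic_lex_empty_if_block_labelling[OF G reg refl])
qed

lemma distance_magic_lex_empty_of_kotzig_array:
  assumes G: "simple_graph V E" and reg: "regular V E r" and "kotzig_array (card V) n \<sigma>"
  shows "distance_magic (lex_verts V (empty_verts n)) (lex_edges E empty_edges)"
proof -
  obtain c where rows: "\<And>i. i < n \<Longrightarrow> bij_betw (\<sigma> i) {0..<card V} {0..<card V}"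
    and cols: "\<And>j. j < card V \<Longrightarrow> (\<Sum>i<n. \<sigma> i j) = c"
    using assms(3) unfolding kotzig_array_def by blast
  have "finite V" using G by (simp add: simple_graph_def)
  then obtain \<phi> where \<phi>: "bij_betw \<phi> V {0..<card V}"
    using ex_bij_betw_finite_nat by blast
  have "bij_betw (\<lambda>y. \<sigma> i (\<phi> y)) V {0..<card V}" if "i < n" for i
    using bij_betw_trans[OF \<phi> rows[OF that]] by (simp add: o_def)
  moreover have "(\<Sum>y\<in>nbhd V E x. \<Sum>i<n. \<sigma> i (\<phi> y)) = r * c" if "x \<in> V" for x
  proof -
    have "(\<Sum>y\<in>nbhd V E x. \<Sum>i<n. \<sigma> i (\<phi> y)) = (\<Sum>y\<in>nbhd V E x. c)"
      using bij_betw_apply[OF \<phi>] cols by (intro sum.cong) (auto simp: nbhd_def)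
    then show ?thesis using reg that by (simp add: regular_def)
  qed
  ultimately show ?thesis
    by (rule distance_magic_lex_empty_if_block_labelling[OF G reg refl])
qed

theorem theorem14:
  fixes V :: "'a set" and E :: "'a \<Rightarrow> 'a \<Rightarrow> bool" and m n r :: nat
  assumes "simple_graph V E" and "regular V E r" and "card V = m"
    and "m \<ge> 1" and "n > 1"
    and "even n \<or> odd (m * n) \<or> distance_magic V E"
  shows "distance_magic (lex_verts V (empty_verts n)) (lex_edges E empty_edges)"
proof -
  consider "distance_magic V E" | "even n" | "odd m" "odd n"
    using assms(6) by (auto simp: even_mult_iff)
  then show ?thesis
  proof cases
    case 1
    then show ?thesis by (rule distance_magic_lex_empty_of_distance_magic[OF assms(1,2)])
  next
    case 2
    then obtain \<sigma> where "kotzig_array (card V) n \<sigma>" using kotzig_array_even by blast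
    then show ?thesis by (rule distance_magic_lex_empty_of_kotzig_array[OF assms(1,2)])
  next
    case 3
    then obtain \<sigma> where "kotzig_array (card V) n \<sigma>" using kotzig_array_odd assms(3,5) by blast
    then show ?thesis by (rule distance_magic_lex_empty_of_kotzig_array[OF assms(1,2)])
  qed
qed


end
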